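(* Let $k\ge2$ be a constant integer. There is a constant $C>0$ such that, with probability $1-o(1)$ as $n\to\infty$, the random $k$-tree $G(n)$ has the following property: for every path $u_hu_{h-1}\cdots u_0$ in $G(n)$ such that $u_i$ is born strictly later than $u_{i-1}$ for all $1\le i\le h$, we have $h\le C\log n$.
   Context: Random $k$-tree process: $G(0)$ is a clique on $k$ vertices (its vertices are born in round $0$); for $t\ge1$, $G(t)$ is obtained from $G(t-1)$ by choosing a $k$-clique of $G(t-1)$ uniformly at random, creating a new vertex (born in round $t$), and joining it to all vertices of the chosen clique. *)

theory Defs
  imports "HOL-Probability.Probability"
begin

text \<open>The initial clique consists of vertices 0,...,k-1
  (born in round 0); the vertex created in round t (t \<ge> 1) is k + t - 1.
  So G(t) has vertex set {0..<k+t}. A graph is represented by its edge set,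
  a set of 2-element sets of vertices.\<close>

definition kcliques :: "nat \<Rightarrow> nat set \<Rightarrow> nat set set \<Rightarrow> nat set set" where
  "kcliques k V E = {S. S \<subseteq> V \<and> card S = k \<and> (\<forall>x\<in>S. \<forall>y\<in>S. x \<noteq> y \<longrightarrow> {x, y} \<in> E)}"

definition birth :: "nat \<Rightarrow> nat \<Rightarrow> nat" where
  "birth k v = (if v < k then 0 else v - k + 1)"

definition init_edges :: "nat \<Rightarrow> nat set set" where
  "init_edges k = {{x, y} | x y. x < k \<and> y < k \<and> x \<noteq> y}"

fun ktree :: "nat \<Rightarrow> nat \<Rightarrow> nat set set pmf" where
  "ktree k 0 = return_pmf (init_edges k)"
| "ktree k (Suc t) = bind_pmf (ktree k t) (\<lambda>E.
     map_pmf (\<lambda>S. E \<union> {{k + t, s} | s. s \<in> S})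
       (pmf_of_set (kcliques k {0..<k + t} E)))"

text \<open>A path u_h u_{h-1} ... u_0 is given as the list [u_0, ..., u_h];
  its length h is length ps - 1. Birth times strictly increase from u_0 to u_h.\<close>
definition increasing_path :: "nat \<Rightarrow> nat \<Rightarrow> nat set set \<Rightarrow> nat list \<Rightarrow> bool" where
  "increasing_path k t E ps \<longleftrightarrow> ps \<noteq> [] \<and> distinct ps \<and> set ps \<subseteq> {0..<k + t} \<and>
     (\<forall>i. Suc i < length ps \<longrightarrow> {ps ! i, ps ! Suc i} \<in> E \<and>
                                 birth k (ps ! i) < birth k (ps ! Suc i))"

end

theory Submission
  imports Defs "HOL-Analysis.Harmonic_Numbers"
begin

text \<open>For a k-clique S of G(t) let depth S be the length of the longest increasing path ending
  in S, and let the potential be the sum of exp (depth S) over all k-cliques S. Attaching the new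
  vertex to S leaves the old cliques and their depths unchanged (an increasing path ending at an
  old vertex cannot pass through the youngest one) and creates k new cliques of depth depth S + 1.
  As S is uniform among the 1 + k t cliques, the expected potential grows by the factor
  1 + k e / (1 + k t) per round, so it is O(n^e) = O(n^3) after n rounds. An increasing path of
  length h forces the potential to be at least exp h, hence by Markov's inequality a path longer
  than 4 ln n occurs with probability O(1/n).\<close>

lemma successively_iff_nth:
  "successively P xs \<longleftrightarrow> (\<forall>i. Suc i < length xs \<longrightarrow> P (xs ! i) (xs ! Suc i))"
proof (induction P xs rule: successively.induct)
  case (3 P x y xs)
  then show ?case by (auto simp: less_Suc_eq_0_disj)
qed simp_all

lemma increasing_path_iff_successively:
  "increasing_path k t E ps \<longleftrightarrow> ps \<noteq> [] \<and> distinct ps \<and> set ps \<subseteq> {0..<k + t} \<and>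
     successively (\<lambda>u v. {u, v} \<in> E \<and> birth k u < birth k v) ps"
  by (simp add: increasing_path_def successively_iff_nth)

lemma birth_le: "v < k + t \<Longrightarrow> birth k v \<le> t"
  by (auto simp: birth_def)

lemma birth_new_vertex [simp]: "birth k (k + t) = Suc t"
  by (simp add: birth_def)

lemma increasing_path_length_le:
  assumes "increasing_path k t E ps"
  shows "length ps \<le> k + t"
proof -
  have "length ps = card (set ps)"
    using assms by (simp add: increasing_path_def distinct_card)
  also have "\<dots> \<le> card {0..<k + t}"
    using assms by (intro card_mono) (auto simp: increasing_path_def)
  finally show ?thesis by simp
qed

lemma increasing_path_singleton: "v < k + t \<Longrightarrow> increasing_path k t E [v]"
  by (simp add: increasing_path_def)

lemma increasing_path_snoc:
  assumes "qs \<noteq> []"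
  shows "increasing_path k t E (qs @ [w]) \<longleftrightarrow>
    increasing_path k t E qs \<and> w \<notin> set qs \<and> w < k + t \<and>
    {last qs, w} \<in> E \<and> birth k (last qs) < birth k w"
  using assms by (auto simp: increasing_path_iff_successively successively_append_iff)

lemma increasing_path_birth_le_last:
  assumes "increasing_path k t E ps" "v \<in> set ps"
  shows "birth k v \<le> birth k (last ps)"
proof -
  have "successively (\<lambda>u v. birth k u < birth k v) ps"
    using assms(1) by (auto simp: increasing_path_iff_successively elim: successively_mono)
  then have sorted: "sorted_wrt (\<lambda>u v. birth k u < birth k v) (butlast ps @ [last ps])"
    using assms(1) by (simp add: successively_conv_sorted_wrt transp_def increasing_path_def)
  have "v \<in> set (butlast ps @ [last ps])"
    using assms by (simp add: increasing_path_def)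
  then show ?thesis
    using sorted by (auto simp: sorted_wrt_append less_imp_le)
qed

lemma increasing_path_initial:
  assumes "increasing_path k 0 E ps"
  shows "length ps = 1"
proof (cases ps rule: remdups_adj.cases)
  case (3 x y rest)
  then have "birth k x < birth k y" "y < k"
    using assms by (auto simp: increasing_path_iff_successively)
  then show ?thesis using birth_le[of y k 0] by simp
qed (use assms in \<open>auto simp: increasing_path_def\<close>)

definition attach :: "nat \<Rightarrow> nat \<Rightarrow> nat set set \<Rightarrow> nat set \<Rightarrow> nat set set" where
  "attach k t E S = E \<union> {{k + t, s} | s. s \<in> S}"

lemma ktree_Suc_attach:
  "ktree k (Suc t) = bind_pmf (ktree k t)
     (\<lambda>E. map_pmf (attach k t E) (pmf_of_set (kcliques k {0..<k + t} E)))"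
  by (simp add: attach_def [abs_def])

lemma attach_edge_iff_old:
  "x \<noteq> k + t \<Longrightarrow> y \<noteq> k + t \<Longrightarrow> {x, y} \<in> attach k t E S \<longleftrightarrow> {x, y} \<in> E"
  by (auto simp: attach_def doubleton_eq_iff)

lemma attach_new_edge: "s \<in> S \<Longrightarrow> {s, k + t} \<in> attach k t E S"
  unfolding attach_def by (blast intro: insert_commute)

lemma attach_edge_iff_new:
  assumes "\<Union>E \<subseteq> {0..<k + t}" "y \<noteq> k + t"
  shows "{y, k + t} \<in> attach k t E S \<longleftrightarrow> y \<in> S"
  using assms by (auto simp: attach_def doubleton_eq_iff)

lemma increasing_path_attach:
  "increasing_path k t E ps \<Longrightarrow> increasing_path k (Suc t) (attach k t E S) ps"
  by (auto simp: increasing_path_def attach_def)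

lemma increasing_path_detach:
  assumes "increasing_path k (Suc t) (attach k t E S) ps" "k + t \<notin> set ps"
  shows "increasing_path k t E ps"
proof -
  have "set ps \<subseteq> {0..<k + t}"
    using assms by (auto simp: increasing_path_def less_Suc_eq)
  moreover have "successively (\<lambda>u v. {u, v} \<in> E \<and> birth k u < birth k v) ps"
    using assms unfolding increasing_path_iff_successively
    by (metis (no_types, lifting) attach_edge_iff_old successively_cong)
  ultimately show ?thesis
    using assms(1) by (simp add: increasing_path_iff_successively)
qed

lemma new_vertex_notin_increasing_path:
  assumes "increasing_path k (Suc t) E ps" "last ps < k + t"
  shows "k + t \<notin> set ps"
  using increasing_path_birth_le_last[OF assms(1), of "k + t"] birth_le[OF assms(2)] by auto

definition new_cliques :: "nat \<Rightarrow> nat \<Rightarrow> nat set \<Rightarrow> nat set set" where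
  "new_cliques k t S = insert (k + t) ` {T. T \<subseteq> S \<and> card T = k - 1}"

lemma finite_kcliques: "finite V \<Longrightarrow> finite (kcliques k V E)"
  by (rule finite_subset[of _ "Pow V"]) (auto simp: kcliques_def)

lemma kcliques_attach_subset:
  assumes E: "\<Union>E \<subseteq> {0..<k + t}"
  shows "kcliques k {0..<k + Suc t} (attach k t E S) \<subseteq> kcliques k {0..<k + t} E \<union> new_cliques k t S"
proof
  fix S' assume S': "S' \<in> kcliques k {0..<k + Suc t} (attach k t E S)"
  show "S' \<in> kcliques k {0..<k + t} E \<union> new_cliques k t S"
  proof (cases "k + t \<in> S'")
    case False
    then have "S' \<subseteq> {0..<k + t}"
      using S' by (auto simp: kcliques_def less_Suc_eq)
    moreover have "{x, y} \<in> E" if "x \<in> S'" "y \<in> S'" "x \<noteq> y" for x y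
      using that S' False attach_edge_iff_old[of x k t y E S] by (auto simp: kcliques_def)
    ultimately have "S' \<in> kcliques k {0..<k + t} E"
      using S' by (simp add: kcliques_def)
    then show ?thesis ..
  next
    case True
    define T where "T = S' - {k + t}"
    have "finite S'"
      using S' by (auto simp: kcliques_def intro: finite_subset)
    then have "card T = k - 1"
      using S' True by (simp add: T_def kcliques_def)
    moreover have "T \<subseteq> S"
    proof
      fix y assume "y \<in> T"
      then have "{y, k + t} \<in> attach k t E S" "y \<noteq> k + t"
        using S' True by (auto simp: T_def kcliques_def)
      then show "y \<in> S" using attach_edge_iff_new[OF E] by blast
    qed
    moreover have "S' = insert (k + t) T"
      using True by (auto simp: T_def)
    ultimately show ?thesis by (auto simp: new_cliques_def)
  qed
qed

lemma new_cliques_subset_kcliques_attach: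
  assumes S: "S \<in> kcliques k {0..<k + t} E" and "k \<ge> 1"
  shows "new_cliques k t S \<subseteq> kcliques k {0..<k + Suc t} (attach k t E S)"
proof
  fix S' assume "S' \<in> new_cliques k t S"
  then obtain T where T: "T \<subseteq> S" "card T = k - 1" "S' = insert (k + t) T"
    by (auto simp: new_cliques_def)
  have S_sub: "S \<subseteq> {0..<k + t}"
    and S_clique: "\<And>x y. x \<in> S \<Longrightarrow> y \<in> S \<Longrightarrow> x \<noteq> y \<Longrightarrow> {x, y} \<in> E"
    using S by (auto simp: kcliques_def)
  have "finite T" "k + t \<notin> T"
    using T(1) S_sub by (auto intro: finite_subset)
  show "S' \<in> kcliques k {0..<k + Suc t} (attach k t E S)"
    unfolding kcliques_def
  proof (intro CollectI conjI ballI impI)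
    show "S' \<subseteq> {0..<k + Suc t}"
      using T S_sub by auto
    show "card S' = k"
      using T \<open>finite T\<close> \<open>k + t \<notin> T\<close> \<open>k \<ge> 1\<close> by simp
    fix x y assume xy: "x \<in> S'" "y \<in> S'" "x \<noteq> y"
    then consider "x = k + t" "y \<in> S" | "y = k + t" "x \<in> S" | "x \<in> S" "y \<in> S"
      using T by auto
    then show "{x, y} \<in> attach k t E S"
    proof cases
      case 1
      have "{k + t, y} = {y, k + t}"
        by (rule insert_commute)
      then show ?thesis using 1 attach_new_edge by simp
    next
      case 2
      then show ?thesis by (simp add: attach_new_edge)
    next
      case 3
      then show ?thesis using S_clique[OF _ _ xy(3)] by (simp add: attach_def)
    qed
  qed
qed

lemma kcliques_attach:
  assumes "S \<in> kcliques k {0..<k + t} E" "\<Union>E \<subseteq> {0..<k + t}" "k \<ge> 1"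
  shows "kcliques k {0..<k + Suc t} (attach k t E S) = kcliques k {0..<k + t} E \<union> new_cliques k t S"
proof (rule equalityI[OF kcliques_attach_subset[OF assms(2)]])
  have "kcliques k {0..<k + t} E \<subseteq> kcliques k {0..<k + Suc t} (attach k t E S)"
    by (auto simp: kcliques_def attach_def)
  then show "kcliques k {0..<k + t} E \<union> new_cliques k t S \<subseteq> kcliques k {0..<k + Suc t} (attach k t E S)"
    using new_cliques_subset_kcliques_attach[OF assms(1,3)] by blast
qed

lemma finite_new_cliques: "finite S \<Longrightarrow> finite (new_cliques k t S)"
  unfolding new_cliques_def by (auto intro: finite_subset[of _ "Pow S"])

lemma card_new_cliques:
  assumes "S \<in> kcliques k {0..<k + t} E" "k \<ge> 1"
  shows "card (new_cliques k t S) = k"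
proof -
  have S: "S \<subseteq> {0..<k + t}" "card S = k"
    using assms by (auto simp: kcliques_def)
  have "inj_on (insert (k + t)) {T. T \<subseteq> S \<and> card T = k - 1}"
    using S(1) by (intro inj_onI) (metis insert_ident atLeastLessThan_iff less_irrefl mem_Collect_eq subsetD)
  then have "card (new_cliques k t S) = card {T. T \<subseteq> S \<and> card T = k - 1}"
    unfolding new_cliques_def by (rule card_image)
  also have "\<dots> = k choose (k - 1)"
    using n_subsets[of S "k - 1"] S finite_subset by auto
  also have "\<dots> = k"
    using assms(2) by (metis binomial_symmetric choose_one diff_diff_cancel diff_le_self)
  finally show ?thesis .
qed

lemma kcliques_Int_new_cliques: "kcliques k {0..<k + t} E \<inter> new_cliques k t S = {}"
  by (auto simp: kcliques_def new_cliques_def)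

definition ktree_inv :: "nat \<Rightarrow> nat \<Rightarrow> nat set set \<Rightarrow> bool" where
  "ktree_inv k t E \<longleftrightarrow> \<Union>E \<subseteq> {0..<k + t} \<and> card (kcliques k {0..<k + t} E) = 1 + k * t \<and>
     (\<forall>v < k + t. \<exists>S \<in> kcliques k {0..<k + t} E. v \<in> S)"

lemma kcliques_init: "kcliques k {0..<k} (init_edges k) = {{0..<k}}"
proof -
  have "S = {0..<k}" if "S \<subseteq> {0..<k}" "card S = k" for S
    using that by (intro card_subset_eq) auto
  moreover have "{x, y} \<in> init_edges k" if "x < k" "y < k" "x \<noteq> y" for x y
    using that unfolding init_edges_def by blast
  ultimately show ?thesis
    by (auto simp: kcliques_def)
qed

lemma ktree_inv_init: "ktree_inv k 0 (init_edges k)"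
proof -
  have "\<Union>(init_edges k) \<subseteq> {0..<k}"
    by (auto simp: init_edges_def)
  then show ?thesis
    using kcliques_init[of k] by (auto simp: ktree_inv_def)
qed

lemma ktree_inv_attach:
  assumes k: "k \<ge> 1" and I: "ktree_inv k t E" and S: "S \<in> kcliques k {0..<k + t} E"
  shows "ktree_inv k (Suc t) (attach k t E S)"
proof -
  have E: "\<Union>E \<subseteq> {0..<k + t}" and card: "card (kcliques k {0..<k + t} E) = 1 + k * t"
    and cover: "\<forall>v < k + t. \<exists>S \<in> kcliques k {0..<k + t} E. v \<in> S"
    using I by (auto simp: ktree_inv_def)
  have S_sub: "S \<subseteq> {0..<k + t}"
    using S by (simp add: kcliques_def)
  note cliques = kcliques_attach[OF S E k]
  have "\<Union>(attach k t E S) \<subseteq> {0..<k + Suc t}"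
    using E S_sub unfolding attach_def by fastforce
  moreover have "card (kcliques k {0..<k + Suc t} (attach k t E S)) = 1 + k * Suc t"
  proof -
    have "finite (new_cliques k t S)"
      using S_sub by (auto intro: finite_new_cliques finite_subset)
    then show ?thesis
      unfolding cliques
      by (simp add: card_Un_disjoint finite_kcliques kcliques_Int_new_cliques card card_new_cliques[OF S k])
  qed
  moreover have "\<exists>S' \<in> kcliques k {0..<k + Suc t} (attach k t E S). v \<in> S'" if v: "v < k + Suc t" for v
  proof (cases "v = k + t")
    case True
    have "k - 1 \<le> card S"
      using S by (simp add: kcliques_def)
    then obtain T where "T \<subseteq> S" "card T = k - 1"
      by (rule obtain_subset_with_card_n)
    then have "insert (k + t) T \<in> new_cliques k t S"
      by (auto simp: new_cliques_def)
    then show ?thesis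
      unfolding cliques True by (intro bexI[of _ "insert (k + t) T"] UnI2) simp_all
  next
    case False
    then have "v < k + t"
      using v by simp
    then obtain S' where "S' \<in> kcliques k {0..<k + t} E" "v \<in> S'"
      using cover by blast
    then show ?thesis
      unfolding cliques by (intro bexI[of _ S'] UnI1)
  qed
  ultimately show ?thesis
    by (simp add: ktree_inv_def)
qed

lemma ktree_inv_if_in_set_pmf:
  assumes "k \<ge> 1" "E \<in> set_pmf (ktree k t)"
  shows "ktree_inv k t E"
  using assms(2)
proof (induction t arbitrary: E)
  case 0
  then show ?case by (simp add: ktree_inv_init)
next
  case (Suc t)
  then obtain E0 where E0: "E0 \<in> set_pmf (ktree k t)"
    and E: "E \<in> set_pmf (map_pmf (attach k t E0) (pmf_of_set (kcliques k {0..<k + t} E0)))"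
    by (auto simp: ktree_Suc_attach simp del: ktree.simps)
  have I: "ktree_inv k t E0"
    using Suc.IH E0 by blast
  then have "kcliques k {0..<k + t} E0 \<noteq> {}"
    by (auto simp: ktree_inv_def)
  then obtain S where "S \<in> kcliques k {0..<k + t} E0" "E = attach k t E0 S"
    using E by (auto simp: finite_kcliques)
  then show ?case
    using ktree_inv_attach[OF assms(1) I] by simp
qed

definition path_lengths :: "nat \<Rightarrow> nat \<Rightarrow> nat set set \<Rightarrow> nat set \<Rightarrow> nat set" where
  "path_lengths k t E S = {length ps - 1 | ps. increasing_path k t E ps \<and> last ps \<in> S}"

definition depth :: "nat \<Rightarrow> nat \<Rightarrow> nat set set \<Rightarrow> nat set \<Rightarrow> nat" where
  "depth k t E S = Max (insert 0 (path_lengths k t E S))"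

lemma finite_path_lengths: "finite (path_lengths k t E S)"
proof (rule finite_subset)
  show "path_lengths k t E S \<subseteq> {..k + t}"
    by (auto simp: path_lengths_def dest: increasing_path_length_le)
qed simp

lemma path_length_le_depth:
  assumes "increasing_path k t E ps" "last ps \<in> S"
  shows "length ps - 1 \<le> depth k t E S"
proof -
  have "length ps - 1 \<in> path_lengths k t E S"
    using assms unfolding path_lengths_def by blast
  then show ?thesis
    unfolding depth_def using finite_path_lengths by (intro Max_ge) auto
qed

lemma depth_le:
  assumes "\<And>ps. increasing_path k t E ps \<Longrightarrow> last ps \<in> S \<Longrightarrow> length ps - 1 \<le> m"
  shows "depth k t E S \<le> m"
  unfolding depth_def using assms finite_path_lengths
  by (subst Max_le_iff) (auto simp: path_lengths_def)

lemma depth_attained: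
  assumes "v \<in> S" "v < k + t"
  obtains ps where "increasing_path k t E ps" "last ps \<in> S" "depth k t E S = length ps - 1"
proof -
  have "0 \<in> path_lengths k t E S"
    using assms increasing_path_singleton[of v k t E] unfolding path_lengths_def by force
  then have "depth k t E S \<in> path_lengths k t E S"
    unfolding depth_def using finite_path_lengths by (auto simp: insert_absorb intro: Max_in)
  then show ?thesis
    using that unfolding path_lengths_def by blast
qed

lemma depth_init: "depth k 0 E S = 0"
  using increasing_path_initial by (intro le_zero_eq[THEN iffD1] depth_le) fastforce

lemma depth_attach_old:
  assumes "S0 \<subseteq> {0..<k + t}"
  shows "depth k (Suc t) (attach k t E S) S0 = depth k t E S0"
proof -
  have "increasing_path k (Suc t) (attach k t E S) ps \<longleftrightarrow> increasing_path k t E ps"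
    if "last ps \<in> S0" for ps
  proof
    assume ps: "increasing_path k (Suc t) (attach k t E S) ps"
    have "last ps < k + t"
      using that assms by auto
    then show "increasing_path k t E ps"
      by (intro increasing_path_detach[OF ps] new_vertex_notin_increasing_path[OF ps])
  qed (rule increasing_path_attach)
  then have "path_lengths k (Suc t) (attach k t E S) S0 = path_lengths k t E S0"
    unfolding path_lengths_def by blast
  then show ?thesis
    unfolding depth_def by simp
qed

lemma depth_attach_new_le:
  assumes E: "\<Union>E \<subseteq> {0..<k + t}" and S: "S \<subseteq> {0..<k + t}" and T: "T \<subseteq> S"
  shows "depth k (Suc t) (attach k t E S) (insert (k + t) T) \<le> Suc (depth k t E S)"
proof (rule depth_le)
  fix ps assume ps: "increasing_path k (Suc t) (attach k t E S) ps" "last ps \<in> insert (k + t) T"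
  show "length ps - 1 \<le> Suc (depth k t E S)"
  proof (cases "last ps = k + t")
    case False
    then have "last ps \<in> S" "last ps < k + t"
      using ps(2) T S by auto
    then have "increasing_path k t E ps"
      by (intro increasing_path_detach[OF ps(1)] new_vertex_notin_increasing_path[OF ps(1)])
    then show ?thesis
      using path_length_le_depth \<open>last ps \<in> S\<close> by (simp add: le_SucI)
  next
    case True
    obtain qs where qs: "ps = qs @ [k + t]"
      using True ps(1) by (metis append_butlast_last_id increasing_path_def)
    show ?thesis
    proof (cases "qs = []")
      case False
      then have "increasing_path k (Suc t) (attach k t E S) qs" "k + t \<notin> set qs"
        and edge: "{last qs, k + t} \<in> attach k t E S"
        using ps(1) unfolding qs increasing_path_snoc[OF False] by auto
      moreover have "last qs \<noteq> k + t"
        using False \<open>k + t \<notin> set qs\<close> last_in_set by metis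
      ultimately have "increasing_path k t E qs" "last qs \<in> S"
        using increasing_path_detach attach_edge_iff_new[OF E] by blast+
      then have "length qs - 1 \<le> depth k t E S"
        by (rule path_length_le_depth)
      then show ?thesis
        using qs False by simp
    qed (simp add: qs)
  qed
qed

lemma depth_attach_new_ge:
  assumes S: "S \<subseteq> {0..<k + t}" "v \<in> S"
  shows "Suc (depth k t E S) \<le> depth k (Suc t) (attach k t E S) (insert (k + t) T)"
proof -
  have "v < k + t"
    using S by auto
  then obtain qs where qs: "increasing_path k t E qs" "last qs \<in> S" "depth k t E S = length qs - 1"
    by (rule depth_attained[OF S(2)])
  have "qs \<noteq> []" "set qs \<subseteq> {0..<k + t}"
    using qs(1) by (auto simp: increasing_path_def)
  moreover have "{last qs, k + t} \<in> attach k t E S"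
    using qs(2) by (rule attach_new_edge)
  moreover have "birth k (last qs) < birth k (k + t)"
    using birth_le[of "last qs" k t] qs(2) S(1) by auto
  ultimately have "increasing_path k (Suc t) (attach k t E S) (qs @ [k + t])"
    using increasing_path_attach[OF qs(1)] by (auto simp: increasing_path_snoc)
  then have "length (qs @ [k + t]) - 1 \<le> depth k (Suc t) (attach k t E S) (insert (k + t) T)"
    by (rule path_length_le_depth) simp
  then show ?thesis
    using qs(3) \<open>qs \<noteq> []\<close> by simp
qed

lemma depth_attach_new:
  assumes "\<Union>E \<subseteq> {0..<k + t}" "S \<subseteq> {0..<k + t}" "v \<in> S" "T \<subseteq> S"
  shows "depth k (Suc t) (attach k t E S) (insert (k + t) T) = Suc (depth k t E S)"
  using depth_attach_new_le[OF assms(1,2,4)] depth_attach_new_ge[OF assms(2,3)] by (rule antisym)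

definition potential :: "nat \<Rightarrow> nat \<Rightarrow> nat set set \<Rightarrow> real" where
  "potential k t E = (\<Sum>S\<in>kcliques k {0..<k + t} E. exp (real (depth k t E S)))"

lemma potential_nonneg: "0 \<le> potential k t E"
  unfolding potential_def by (intro sum_nonneg) simp

lemma potential_init: "potential k 0 (init_edges k) = 1"
  using kcliques_init[of k] by (simp add: potential_def depth_init)

lemma exp_path_length_le_potential:
  assumes "ktree_inv k t E" "increasing_path k t E ps"
  shows "exp (real (length ps - 1)) \<le> potential k t E"
proof -
  have "last ps \<in> set ps"
    using assms(2) by (simp add: increasing_path_def)
  then have "last ps < k + t"
    using assms(2) unfolding increasing_path_def by (meson atLeastLessThan_iff subsetD)
  then obtain S where S: "S \<in> kcliques k {0..<k + t} E" "last ps \<in> S"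
    using assms(1) by (auto simp: ktree_inv_def)
  have "exp (real (length ps - 1)) \<le> exp (real (depth k t E S))"
    using path_length_le_depth[OF assms(2) S(2)] by simp
  also have "\<dots> \<le> potential k t E"
    unfolding potential_def using S(1) by (intro member_le_sum) (simp_all add: finite_kcliques)
  finally show ?thesis .
qed

lemma potential_attach:
  assumes k: "k \<ge> 1" and I: "ktree_inv k t E" and S: "S \<in> kcliques k {0..<k + t} E"
  shows "potential k (Suc t) (attach k t E S) = potential k t E + real k * exp 1 * exp (real (depth k t E S))"
proof -
  have E: "\<Union>E \<subseteq> {0..<k + t}"
    using I by (simp add: ktree_inv_def)
  have S_sub: "S \<subseteq> {0..<k + t}" and "S \<noteq> {}"
    using S k by (auto simp: kcliques_def)
  then obtain v where v: "v \<in> S"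
    by blast
  have fin: "finite (new_cliques k t S)"
    using S_sub by (auto intro: finite_new_cliques finite_subset)
  have "potential k (Suc t) (attach k t E S) =
      (\<Sum>S'\<in>kcliques k {0..<k + t} E. exp (real (depth k (Suc t) (attach k t E S) S'))) +
      (\<Sum>S'\<in>new_cliques k t S. exp (real (depth k (Suc t) (attach k t E S) S')))"
    unfolding potential_def kcliques_attach[OF S E k]
    by (rule sum.union_disjoint[OF finite_kcliques fin kcliques_Int_new_cliques]) simp
  also have "(\<Sum>S'\<in>kcliques k {0..<k + t} E. exp (real (depth k (Suc t) (attach k t E S) S'))) =
      potential k t E"
    unfolding potential_def by (intro sum.cong refl) (simp add: depth_attach_old kcliques_def)
  also have "(\<Sum>S'\<in>new_cliques k t S. exp (real (depth k (Suc t) (attach k t E S) S'))) =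
      (\<Sum>S'\<in>new_cliques k t S. exp 1 * exp (real (depth k t E S)))"
    by (intro sum.cong refl)
      (auto simp: new_cliques_def depth_attach_new[OF E S_sub v] exp_add[symmetric] add.commute)
  also have "\<dots> = real k * exp 1 * exp (real (depth k t E S))"
    using card_new_cliques[OF S k] by simp
  finally show ?thesis .
qed

lemma sum_potential_attach:
  assumes k: "k \<ge> 1" and I: "ktree_inv k t E"
  shows "(\<Sum>S\<in>kcliques k {0..<k + t} E. potential k (Suc t) (attach k t E S)) =
    (1 + real k * real t + real k * exp 1) * potential k t E"
proof -
  have "card (kcliques k {0..<k + t} E) = 1 + k * t"
    using I by (simp add: ktree_inv_def)
  then show ?thesis
    using potential_attach[OF k I]
    by (simp add: sum.distrib sum_distrib_left potential_def algebra_simps)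
qed

lemma nn_integral_potential_attach:
  assumes k: "k \<ge> 1" and I: "ktree_inv k t E"
  shows "(\<integral>\<^sup>+S. potential k (Suc t) (attach k t E S) \<partial>pmf_of_set (kcliques k {0..<k + t} E)) =
    ennreal ((1 + real k * exp 1 / (1 + real k * real t)) * potential k t E)"
proof -
  let ?C = "kcliques k {0..<k + t} E"
  have card: "card ?C = 1 + k * t"
    using I by (simp add: ktree_inv_def)
  then have "?C \<noteq> {}"
    by auto
  then have "(\<integral>\<^sup>+S. potential k (Suc t) (attach k t E S) \<partial>pmf_of_set ?C) =
      ennreal (\<Sum>S\<in>?C. potential k (Suc t) (attach k t E S)) / ennreal (1 + real k * real t)"
    by (simp add: nn_integral_pmf_of_set finite_kcliques potential_nonneg sum_nonneg card
        ennreal_of_nat_eq_real_of_nat)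
  also have "\<dots> = ennreal ((\<Sum>S\<in>?C. potential k (Suc t) (attach k t E S)) / (1 + real k * real t))"
    by (intro divide_ennreal sum_nonneg potential_nonneg) (simp add: add_pos_nonneg)
  also have "(\<Sum>S\<in>?C. potential k (Suc t) (attach k t E S)) / (1 + real k * real t) =
      (1 + real k * exp 1 / (1 + real k * real t)) * potential k t E"
  proof -
    have "1 + real k * real t > 0"
      by (simp add: add_pos_nonneg)
    then show ?thesis
      unfolding sum_potential_attach[OF k I] by (simp add: field_simps)
  qed
  finally show ?thesis .
qed

definition potential_mean :: "nat \<Rightarrow> nat \<Rightarrow> real" where
  "potential_mean k n = (\<Prod>i<n. 1 + real k * exp 1 / (1 + real k * real i))"

lemma potential_mean_nonneg: "0 \<le> potential_mean k n"
  unfolding potential_mean_def by (intro prod_nonneg) (simp add: add_nonneg_nonneg)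

lemma nn_integral_potential:
  assumes k: "k \<ge> 1"
  shows "(\<integral>\<^sup>+E. potential k t E \<partial>ktree k t) = ennreal (potential_mean k t)"
proof (induction t)
  case 0
  then show ?case
    by (simp add: potential_init potential_mean_def)
next
  case (Suc t)
  define c where "c = 1 + real k * exp 1 / (1 + real k * real t)"
  have "(\<integral>\<^sup>+E. potential k (Suc t) E \<partial>ktree k (Suc t)) =
      (\<integral>\<^sup>+E. (\<integral>\<^sup>+S. potential k (Suc t) (attach k t E S) \<partial>pmf_of_set (kcliques k {0..<k + t} E))
        \<partial>ktree k t)"
    by (simp add: attach_def)
  also have "\<dots> = (\<integral>\<^sup>+E. ennreal c * potential k t E \<partial>ktree k t)"
    by (intro nn_integral_cong_AE)
      (auto simp: AE_measure_pmf_iff c_def nn_integral_potential_attach[OF k]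
        ktree_inv_if_in_set_pmf[OF k] ennreal_mult potential_nonneg)
  also have "\<dots> = ennreal c * (\<integral>\<^sup>+E. potential k t E \<partial>ktree k t)"
    by (rule nn_integral_cmult) simp
  also have "\<dots> = ennreal (potential_mean k (Suc t))"
    by (simp add: Suc.IH c_def potential_mean_def ennreal_mult' potential_mean_nonneg mult.commute)
  finally show ?case .
qed

lemma sum_weights_le_harm: "(\<Sum>i<Suc m. real k / (1 + real k * real i)) \<le> real k + harm m"
proof (induction m)
  case 0
  then show ?case by (simp add: harm_def)
next
  case (Suc m)
  have "real k / (1 + real k * real (Suc m)) \<le> inverse (real (Suc m))"
    by (simp add: field_simps add_pos_nonneg)
  then show ?case
    using Suc.IH by (simp add: harm_Suc)
qed

lemma harm_le_ln: "m \<ge> 1 \<Longrightarrow> harm m \<le> 1 + ln (real m)"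
  using euler_mascheroni_sequence_decreasing[of 1 m] by (simp add: harm_def)

lemma potential_mean_le:
  assumes n: "n \<ge> 2"
  shows "potential_mean k n \<le> exp (exp 1 * (real k + 1)) * real n ^ 3"
proof -
  obtain m where m: "n = Suc m" "m \<ge> 1"
    using n by (cases n) auto
  define w where "w i = real k / (1 + real k * real i)" for i
  have "potential_mean k n = (\<Prod>i<n. 1 + exp 1 * w i)"
    by (simp add: potential_mean_def w_def mult.commute)
  also have "\<dots> \<le> (\<Prod>i<n. exp (exp 1 * w i))"
    by (intro prod_mono) (simp add: w_def add_nonneg_nonneg)
  also have "\<dots> = exp (exp 1 * (\<Sum>i<n. w i))"
    by (simp add: exp_sum sum_distrib_left)
  also have "\<dots> \<le> exp (exp 1 * (real k + 1) + 3 * ln (real n))"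
  proof -
    have "(\<Sum>i<n. w i) \<le> real k + harm m"
      using sum_weights_le_harm[where m = m and k = k] by (simp add: w_def m(1))
    also have "\<dots> \<le> real k + 1 + ln (real n)"
    proof -
      have "ln (real m) \<le> ln (real n)"
        using m by simp
      then show ?thesis
        using harm_le_ln[OF m(2)] by linarith
    qed
    finally have "exp 1 * (\<Sum>i<n. w i) \<le> exp 1 * (real k + 1) + exp 1 * ln (real n)"
      by (simp add: distrib_left[symmetric])
    also have "exp 1 * ln (real n) \<le> 3 * ln (real n)"
      using n exp_le by (intro mult_right_mono) auto
    finally show ?thesis
      by simp
  qed
  also have "\<dots> = exp (exp 1 * (real k + 1)) * real n ^ 3"
  proof -
    have "exp (3 * ln (real n)) = real n ^ 3"
      using exp_of_nat_mult[of 3 "ln (real n)"] n by simp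
    then show ?thesis
      by (simp add: exp_add)
  qed
  finally show ?thesis .
qed

lemma prob_potential_ge_le:
  assumes k: "k \<ge> 1" and c: "c > 0"
  shows "measure_pmf.prob (ktree k n) {E. c \<le> potential k n E} \<le> potential_mean k n / c"
proof -
  let ?M = "measure_pmf (ktree k n)"
  have "integrable ?M (potential k n) \<and> integral\<^sup>L ?M (potential k n) = potential_mean k n"
    using nn_integral_eq_integrable[of "potential k n" ?M "potential_mean k n"]
      nn_integral_potential[OF k] potential_nonneg potential_mean_nonneg by simp
  then show ?thesis
    using integral_Markov_inequality_measure[of ?M "potential k n" UNIV c] c potential_nonneg
    by simp
qed

lemma prob_all_increasing_paths_short:
  assumes k: "k \<ge> 1" and n: "n \<ge> 2"
  shows "1 - exp (exp 1 * (real k + 1)) / real n \<le> measure_pmf.prob (ktree k n)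
    {E. \<forall>ps. increasing_path k n E ps \<longrightarrow> real (length ps - 1) \<le> 4 * ln (real n)}"
    (is "_ \<le> measure_pmf.prob _ ?G")
proof -
  let ?M = "measure_pmf (ktree k n)"
  have n_pos: "real n > 0"
    using n by simp
  have "(UNIV - ?G) \<inter> set_pmf (ktree k n) \<subseteq> {E. real n ^ 4 \<le> potential k n E}"
  proof
    fix E assume E: "E \<in> (UNIV - ?G) \<inter> set_pmf (ktree k n)"
    then obtain ps where ps: "increasing_path k n E ps" "4 * ln (real n) < real (length ps - 1)"
      by auto
    have "real n ^ 4 = exp (4 * ln (real n))"
      using exp_of_nat_mult[of 4 "ln (real n)"] n_pos by simp
    also have "\<dots> \<le> exp (real (length ps - 1))"
      using ps(2) by simp
    also have "\<dots> \<le> potential k n E"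
      using exp_path_length_le_potential ktree_inv_if_in_set_pmf[OF k] E ps(1) by blast
    finally show "E \<in> {E. real n ^ 4 \<le> potential k n E}"
      by simp
  qed
  then have "measure ?M (UNIV - ?G) \<le> measure ?M {E. real n ^ 4 \<le> potential k n E}"
    by (subst measure_Int_set_pmf[symmetric]) (intro measure_pmf.finite_measure_mono, auto)
  also have "\<dots> \<le> potential_mean k n / real n ^ 4"
    using prob_potential_ge_le[OF k] n_pos by simp
  also have "\<dots> \<le> exp (exp 1 * (real k + 1)) * real n ^ 3 / real n ^ 4"
    using potential_mean_le[OF n, of k] n_pos by (intro divide_right_mono) auto
  also have "\<dots> = exp (exp 1 * (real k + 1)) / real n"
    using n_pos by (simp add: power_numeral_reduce)
  finally show ?thesis
    using measure_pmf.prob_compl[of ?G "ktree k n"] by simp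
qed

theorem proposition5:
  fixes k :: nat
  assumes "k \<ge> 2"
  shows "\<exists>C::real. C > 0 \<and>
    (\<lambda>n. measure_pmf.prob (ktree k n)
        {E. \<forall>ps. increasing_path k n E ps \<longrightarrow> real (length ps - 1) \<le> C * ln (real n)})
    \<longlonglongrightarrow> 1"
proof (intro exI[of _ 4] conjI)
  let ?A = "exp (exp 1 * (real k + 1))"
  let ?p = "\<lambda>n. measure_pmf.prob (ktree k n)
    {E. \<forall>ps. increasing_path k n E ps \<longrightarrow> real (length ps - 1) \<le> 4 * ln (real n)}"
  have lower: "eventually (\<lambda>n. 1 - ?A / real n \<le> ?p n) sequentially"
    using assms by (intro eventually_mono[OF eventually_ge_at_top[of 2]] prob_all_increasing_paths_short) simp
  have lim: "(\<lambda>n. 1 - ?A / real n) \<longlonglongrightarrow> 1"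
    using tendsto_diff[OF tendsto_const lim_const_over_n[of ?A]] by simp
  show "?p \<longlonglongrightarrow> 1"
    using tendsto_sandwich[OF lower _ lim tendsto_const] by simp
qed simp

end
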